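(* Let $(\Delta,\mathcal{D},\mathbb{P})$ be a probability space, $\mathcal{Z}$ a set, and $M_m:\Delta^m\to\mathcal{Z}$, $m=0,1,2,\ldots$, a family of maps ($M_0$ being the decision returned for the empty list). For each $\delta\in\Delta$ let $\mathcal{Z}'_\delta\subseteq\mathcal{Z}$ and $\mathcal{Z}''_\delta\subseteq\mathcal{Z}$ be given sets. Assume that the maps $M_m$ are consistent with respect to $\{\mathcal{Z}'_\delta\}$, i.e., for all integers $m\ge 0$, $n>0$ and all $\delta_1,\ldots,\delta_{m+n}\in\Delta$: (i) (permutation invariance) $M_m(\delta_1,\ldots,\delta_m)=M_m(\delta_{i_1},\ldots,\delta_{i_m})$ for every permutation $(i_1,\ldots,i_m)$ of $(1,\ldots,m)$; (ii) (confirmation under appropriateness) if $M_m(\delta_1,\ldots,\delta_m)\in\mathcal{Z}'_{\delta_{m+i}}$ for all $i\in\{1,\ldots,n\}$, then $M_{m+n}(\delta_1,\ldots,\delta_{m+n})=M_m(\delta_1,\ldots,\delta_m)$; (iii) (responsiveness to inappropriateness) if $M_m(\delta_1,\ldots,\delta_m)\notin\mathcal{Z}'_{\delta_{m+i}}$ for some $i\in\{1,\ldots,n\}$, then $M_{m+n}(\delta_1,\ldots,\delta_{m+n})\neq M_m(\delta_1,\ldots,\delta_m)$. Define the instrumental maps $M^+_m:\Delta^m\to\mathcal{Z}\times\mathbb{N}$ by $M^+_m(\delta_1,\ldots,\delta_m)=(z^*_m,c^*_m)$, where $z^*_m=M_m(\delta_1,\ldots,\delta_m)$ and $c^*_m=\#\{i\in\{1,\ldots,m\}: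 z^*_m\notin\mathcal{Z}''_{\delta_i}\}$, and for each $\delta$ set $\mathcal{Z}^+_\delta:=(\mathcal{Z}'_\delta\times\mathbb{N})\cap(\mathcal{Z}''_\delta\times\mathbb{N})$. Then the maps $M^+_m$ satisfy conditions (i), (ii), (iii) above with $M_m$ replaced by $M^+_m$ (and $M_{m+n}$ by $M^+_{m+n}$) and $\mathcal{Z}'_{\delta_{m+i}}$ replaced by $\mathcal{Z}^+_{\delta_{m+i}}$.
   Context: $\mathbb{N}$ denotes the set of non-negative integers and $\#$ denotes cardinality. $\mathcal{Z}'_\delta$ is interpreted as the set of decisions that are "baseline appropriate" for scenario $\delta$, and $\mathcal{Z}''_\delta$ as the set of decisions that are "post-design appropriate" for $\delta$; no consistency assumption is made with respect to $\mathcal{Z}''_\delta$. *)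

theory Defs
  imports "HOL-Probability.Probability" "HOL-Combinatorics.Permutations"
begin

text \<open>A family of maps M_m : Delta^m -> Z is represented by a single function on lists,
  M_m(d_1,...,d_m) = M [d_1,...,d_m]; the decision set Z is the type 'z.\<close>

definition consistent :: "'d set \<Rightarrow> ('d list \<Rightarrow> 'z) \<Rightarrow> ('d \<Rightarrow> 'z set) \<Rightarrow> bool" where
  "consistent Delta M Zp \<longleftrightarrow>
     (\<forall>xs. set xs \<subseteq> Delta \<longrightarrow>
        (\<forall>p. p permutes {..<length xs} \<longrightarrow>
             M xs = M (map (\<lambda>i. xs ! p i) [0..<length xs]))) \<and>
     (\<forall>xs ys. set xs \<subseteq> Delta \<longrightarrow> set ys \<subseteq> Delta \<longrightarrow> ys \<noteq> [] \<longrightarrow>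
        (\<forall>y\<in>set ys. M xs \<in> Zp y) \<longrightarrow> M (xs @ ys) = M xs) \<and>
     (\<forall>xs ys. set xs \<subseteq> Delta \<longrightarrow> set ys \<subseteq> Delta \<longrightarrow> ys \<noteq> [] \<longrightarrow>
        (\<exists>y\<in>set ys. M xs \<notin> Zp y) \<longrightarrow> M (xs @ ys) \<noteq> M xs)"

definition Mplus :: "('d \<Rightarrow> 'z set) \<Rightarrow> ('d list \<Rightarrow> 'z) \<Rightarrow> 'd list \<Rightarrow> 'z \<times> nat" where
  "Mplus Zpp M xs = (M xs, card {i \<in> {1..length xs}. M xs \<notin> Zpp (xs ! (i - 1))})"

definition Zplus :: "('d \<Rightarrow> 'z set) \<Rightarrow> ('d \<Rightarrow> 'z set) \<Rightarrow> 'd \<Rightarrow> ('z \<times> nat) set" where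
  "Zplus Zp Zpp d = (Zp d \<times> (UNIV :: nat set)) \<inter> (Zpp d \<times> (UNIV :: nat set))"

end

theory Submission
  imports Defs
begin

text \<open>The counter of \<open>M\<^sup>+\<close> only counts the scenarios failing \<open>Z''\<close>, so it is
  invariant under permutations and unchanged by appending scenarios on which the decision is
  \<open>Z''\<close>-appropriate, while it strictly grows when an appended scenario is not. Hence when \<open>M\<close>
  confirms its decision, \<open>M\<^sup>+\<close> keeps its pair exactly if every new scenario is also
  \<open>Z''\<close>-appropriate, and when \<open>M\<close> changes its decision, so does \<open>M\<^sup>+\<close>.\<close>

definition permutation_invariant_on :: "'d set \<Rightarrow> ('d list \<Rightarrow> 'z) \<Rightarrow> bool" where
  "permutation_invariant_on Delta M \<longleftrightarrow>
     (\<forall>xs. set xs \<subseteq> Delta \<longrightarrow>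
        (\<forall>p. p permutes {..<length xs} \<longrightarrow>
             M xs = M (map (\<lambda>i. xs ! p i) [0..<length xs])))"

definition confirming_on :: "'d set \<Rightarrow> ('d list \<Rightarrow> 'z) \<Rightarrow> ('d \<Rightarrow> 'z set) \<Rightarrow> bool" where
  "confirming_on Delta M Zp \<longleftrightarrow>
     (\<forall>xs ys. set xs \<subseteq> Delta \<longrightarrow> set ys \<subseteq> Delta \<longrightarrow> ys \<noteq> [] \<longrightarrow>
        (\<forall>y\<in>set ys. M xs \<in> Zp y) \<longrightarrow> M (xs @ ys) = M xs)"

definition responsive_on :: "'d set \<Rightarrow> ('d list \<Rightarrow> 'z) \<Rightarrow> ('d \<Rightarrow> 'z set) \<Rightarrow> bool" where
  "responsive_on Delta M Zp \<longleftrightarrow>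
     (\<forall>xs ys. set xs \<subseteq> Delta \<longrightarrow> set ys \<subseteq> Delta \<longrightarrow> ys \<noteq> [] \<longrightarrow>
        (\<exists>y\<in>set ys. M xs \<notin> Zp y) \<longrightarrow> M (xs @ ys) \<noteq> M xs)"

lemma consistent_iff:
  "consistent Delta M Zp \<longleftrightarrow>
     permutation_invariant_on Delta M \<and> confirming_on Delta M Zp \<and> responsive_on Delta M Zp"
  unfolding consistent_def permutation_invariant_on_def confirming_on_def responsive_on_def
  by blast

lemma card_one_based_indices_eq_length_filter:
  "card {i \<in> {1..length xs}. Q (xs ! (i - 1))} = length (filter Q xs)"
proof -
  have "{i \<in> {1..length xs}. Q (xs ! (i - 1))} = Suc ` {i. i < length xs \<and> Q (xs ! i)}"
  proof (rule set_eqI, rule iffI)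
    fix i assume "i \<in> {i \<in> {1..length xs}. Q (xs ! (i - 1))}"
    then show "i \<in> Suc ` {i. i < length xs \<and> Q (xs ! i)}"
      by (intro image_eqI[of _ _ "i - 1"]) auto
  qed auto
  then show ?thesis by (simp add: length_filter_conv_card card_image)
qed

lemma length_filter_permuted:
  assumes "p permutes {..<length xs}"
  shows "length (filter Q (map (\<lambda>i. xs ! p i) [0..<length xs])) = length (filter Q xs)"
proof -
  have "mset (map (\<lambda>i. xs ! p i) [0..<length xs]) = mset xs"
    using mset_permute_list[OF assms] by (simp add: permute_list_def)
  then show ?thesis by (metis mset_filter size_mset)
qed

lemma Mplus_eq_length_filter:
  "Mplus Zpp M xs = (M xs, length (filter (\<lambda>d. M xs \<notin> Zpp d) xs))"
  unfolding Mplus_def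
  using card_one_based_indices_eq_length_filter[of xs "\<lambda>d. M xs \<notin> Zpp d"] by simp

lemma Mplus_in_Zplus_iff:
  "Mplus Zpp M xs \<in> Zplus Zp Zpp y \<longleftrightarrow> M xs \<in> Zp y \<and> M xs \<in> Zpp y"
  by (simp add: Mplus_def Zplus_def)

lemma Mplus_append_of_eq:
  assumes "M (xs @ ys) = M xs"
  shows "Mplus Zpp M (xs @ ys) = Mplus Zpp M xs \<longleftrightarrow> (\<forall>y\<in>set ys. M xs \<in> Zpp y)"
  unfolding Mplus_eq_length_filter assms by (simp add: filter_empty_conv)

lemma permutation_invariant_on_Mplus:
  assumes "permutation_invariant_on Delta M"
  shows "permutation_invariant_on Delta (Mplus Zpp M)"
  unfolding permutation_invariant_on_def
proof (intro allI impI)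
  fix xs p
  assume "set xs \<subseteq> Delta" and p: "p permutes {..<length xs}"
  then have "M (map (\<lambda>i. xs ! p i) [0..<length xs]) = M xs"
    using assms unfolding permutation_invariant_on_def by metis
  then show "Mplus Zpp M xs = Mplus Zpp M (map (\<lambda>i. xs ! p i) [0..<length xs])"
    unfolding Mplus_eq_length_filter using length_filter_permuted[OF p] by simp
qed

lemma confirming_on_Mplus:
  assumes "confirming_on Delta M Zp"
  shows "confirming_on Delta (Mplus Zpp M) (Zplus Zp Zpp)"
  unfolding confirming_on_def
proof (intro allI impI)
  fix xs ys
  assume "set xs \<subseteq> Delta" "set ys \<subseteq> Delta" "ys \<noteq> []"
    and "\<forall>y\<in>set ys. Mplus Zpp M xs \<in> Zplus Zp Zpp y"
  moreover from this have "M (xs @ ys) = M xs"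
    using assms unfolding confirming_on_def Mplus_in_Zplus_iff by blast
  ultimately show "Mplus Zpp M (xs @ ys) = Mplus Zpp M xs"
    by (simp add: Mplus_append_of_eq Mplus_in_Zplus_iff)
qed

lemma responsive_on_Mplus:
  assumes "confirming_on Delta M Zp" and "responsive_on Delta M Zp"
  shows "responsive_on Delta (Mplus Zpp M) (Zplus Zp Zpp)"
  unfolding responsive_on_def
proof (intro allI impI)
  fix xs ys
  assume xs: "set xs \<subseteq> Delta" and ys: "set ys \<subseteq> Delta" "ys \<noteq> []"
    and bad: "\<exists>y\<in>set ys. Mplus Zpp M xs \<notin> Zplus Zp Zpp y"
  show "Mplus Zpp M (xs @ ys) \<noteq> Mplus Zpp M xs"
  proof (cases "\<forall>y\<in>set ys. M xs \<in> Zp y")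
    case True
    then have "M (xs @ ys) = M xs"
      using assms(1) xs ys unfolding confirming_on_def by blast
    moreover have "\<exists>y\<in>set ys. M xs \<notin> Zpp y"
      using bad True by (auto simp: Mplus_in_Zplus_iff)
    ultimately show ?thesis by (simp add: Mplus_append_of_eq)
  next
    case False
    then have "M (xs @ ys) \<noteq> M xs"
      using assms(2) xs ys unfolding responsive_on_def by blast
    then show ?thesis by (simp add: Mplus_def)
  qed
qed

lemma consistent_Mplus:
  assumes "consistent Delta M Zp"
  shows "consistent Delta (Mplus Zpp M) (Zplus Zp Zpp)"
  using assms
  by (simp add: consistent_iff permutation_invariant_on_Mplus confirming_on_Mplus
      responsive_on_Mplus)

text \<open>The probability measure only supplies the scenario set; the argument is pointwise.\<close>

theorem lemma1:
  fixes P :: "'d measure" and M :: "'d list \<Rightarrow> 'z"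
    and Zp Zpp :: "'d \<Rightarrow> 'z set"
  assumes "prob_space P"
    and "consistent (space P) M Zp"
  shows "consistent (space P) (Mplus Zpp M) (Zplus Zp Zpp)"
  using assms(2) by (rule consistent_Mplus)

end
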